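(* Let $n\ge 3$ and $\mathcal F=\{\{1,2\},\{2,3\},\dots,\{n-1,n\},\{n,1\}\}$. Then the building closure of $\mathcal F$ is $\mathrm{Con}(C_n)$, and $\mathcal F$ is tight. Consequently, in the description $$\Delta_{\mathcal F}=\sum_{i=1}^n[e_i,e_{i+1}]=\{x:\phi_{[n]}(x)=n,\ \phi_X(x)\ge|\mathcal F_X|\ \forall X\in\mathrm{Con}(C_n)\}$$ (with $e_{n+1}:=e_1$) all inequalities for $X\in\mathrm{Con}(C_n)\setminus\{[n]\}$ are irredundant.
   Context: $\mathrm{Con}(C_n)$ is the family of subsets of $[n]$ inducing connected subgraphs of the cycle graph $C_n$, i.e. $[n]$ together with all nonempty proper cyclic intervals $\{i,i+1,\dots,j\}$ (indices mod $n$); the nestohedron $\Delta_{\mathrm{Con}(C_n)}$ is the cyclohedron $W_n$. A building set on $[n]$ is a family of nonempty subsets containing all singletons and closed under unions of intersecting members; the building closure of $\mathcal F$ is the minimal building set containing it. $\mathcal F_X=\{F\in\mathcal F:F\subseteq X\}$, $\phi_X(x)=\sum_{i\in X}x_i$, $\Delta_F=\mathrm{Conv}\{e_i:i\in F\}$, $\Delta_{\mathcal F}=\sum_{F\in\mathcal F}\Delta_F$. A connected hypergraph $\mathcal F$ is tight if each inequality $\phi_X(x)\ge|\mathcal F_X|$, $X\in\widehat{\mathcal F}\setminus\{[n]\}$, in the description $\Delta_{\mathcal F}=\{x:\phi_{[n]}(x)=|\mathcal F|,\ \phi_X(x)\ge|\mathcal F_X|\ \forall X\in\widehat{\mathcal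 F}\}$ is irredundant. *)

theory Defs
  imports Complex_Main
begin

text \<open>Points of R^n are modelled as functions nat => real that vanish outside {1..n}.\<close>

definition phi :: "nat set \<Rightarrow> (nat \<Rightarrow> real) \<Rightarrow> real" where
  "phi X x = (\<Sum>i\<in>X. x i)"

definition std_basis :: "nat \<Rightarrow> nat \<Rightarrow> real" where
  "std_basis i = (\<lambda>j. if j = i then 1 else 0)"

definition simplex :: "nat set \<Rightarrow> (nat \<Rightarrow> real) set" where
  "simplex F = {x. \<exists>c :: nat \<Rightarrow> real. (\<forall>i\<in>F. c i \<ge> 0) \<and> (\<Sum>i\<in>F. c i) = 1
                   \<and> x = (\<lambda>j. \<Sum>i\<in>F. c i * std_basis i j)}"

definition nestohedron :: "nat set set \<Rightarrow> (nat \<Rightarrow> real) set" where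
  "nestohedron \<F> = {x. \<exists>y :: nat set \<Rightarrow> nat \<Rightarrow> real.
      (\<forall>F\<in>\<F>. y F \<in> simplex F) \<and> x = (\<lambda>j. \<Sum>F\<in>\<F>. y F j)}"

definition restr :: "nat set set \<Rightarrow> nat set \<Rightarrow> nat set set" where
  "restr \<F> X = {F\<in>\<F>. F \<subseteq> X}"

definition polyh :: "nat \<Rightarrow> nat set set \<Rightarrow> nat set set \<Rightarrow> (nat \<Rightarrow> real) set" where
  "polyh n \<F> S = {x. (\<forall>j. j \<notin> {1..n} \<longrightarrow> x j = 0)
      \<and> phi {1..n} x = real (card \<F>)
      \<and> (\<forall>X\<in>S. phi X x \<ge> real (card (restr \<F> X)))}"

definition building_set :: "nat \<Rightarrow> nat set set \<Rightarrow> bool" where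
  "building_set n B \<longleftrightarrow> (\<forall>F\<in>B. F \<noteq> {} \<and> F \<subseteq> {1..n})
      \<and> (\<forall>i\<in>{1..n}. {i} \<in> B)
      \<and> (\<forall>F\<in>B. \<forall>G\<in>B. F \<inter> G \<noteq> {} \<longrightarrow> F \<union> G \<in> B)"

definition building_closure :: "nat \<Rightarrow> nat set set \<Rightarrow> nat set set" where
  "building_closure n \<F> = \<Inter>{B. building_set n B \<and> \<F> \<subseteq> B}"

definition connected_hypergraph :: "nat \<Rightarrow> nat set set \<Rightarrow> bool" where
  "connected_hypergraph n \<F> \<longleftrightarrow> (\<forall>A. A \<subseteq> {1..n} \<and> A \<noteq> {} \<and> A \<noteq> {1..n} \<longrightarrow>
      (\<exists>F\<in>\<F>. F \<inter> A \<noteq> {} \<and> F \<inter> ({1..n} - A) \<noteq> {}))"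

definition tight :: "nat \<Rightarrow> nat set set \<Rightarrow> bool" where
  "tight n \<F> \<longleftrightarrow> connected_hypergraph n \<F> \<and>
     (\<forall>X \<in> building_closure n \<F> - {{1..n}}.
        polyh n \<F> (building_closure n \<F> - {X}) \<noteq> polyh n \<F> (building_closure n \<F>))"

definition cyc_interval :: "nat \<Rightarrow> nat \<Rightarrow> nat \<Rightarrow> nat set" where
  "cyc_interval n i k = {((i - 1 + t) mod n) + 1 | t. t < k}"

definition Con_cycle :: "nat \<Rightarrow> nat set set" where
  "Con_cycle n = insert {1..n} {cyc_interval n i k | i k. i \<in> {1..n} \<and> 1 \<le> k \<and> k < n}"

definition cycle_edges :: "nat \<Rightarrow> nat set set" where
  "cycle_edges n = {{i, i mod n + 1} | i. i \<in> {1..n}}"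

end

theory Submission
  imports Defs
begin

text \<open>
  The edges of C_n are arcs, and the union of two intersecting arcs is an arc or all of [n];
  conversely every arc is grown edge by edge. Hence the building closure of the edges is
  Con(C_n).

  A point of the Minkowski sum puts weight w_i on e_i and 1 - w_i on e_(i+1) for each edge,
  so x_j = 1 + w_j - w_(j-1). Conversely, for x in the polyhedron the partial sums
  S_j = phi_[j](x) - j differ pairwise by at most 1, by the inequalities for an arc and for
  its complementary arc, so w = S - min S is a valid choice of weights.

  For irredundancy, the point equal to 1 - D/k on an arc X of size k and to 1 + D/(n-k)
  elsewhere, with D = 1 + 1/n, violates the inequality for X and no other.
\<close>

section \<open>Arcs of the cycle\<close>

text \<open>Arcs of C_n are handled as images \<open>cyc_pos n ` {a..<a + k}\<close> of integer intervals.\<close>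

definition cyc_pos :: "nat \<Rightarrow> nat \<Rightarrow> nat" where
  "cyc_pos n u = u mod n + 1"

lemma cyc_pos_in: "n > 0 \<Longrightarrow> cyc_pos n u \<in> {1..n}"
  by (simp add: cyc_pos_def Suc_leI)

lemma image_cyc_pos_subset: "n > 0 \<Longrightarrow> cyc_pos n ` A \<subseteq> {1..n}"
  using cyc_pos_in by blast

lemma cyc_pos_less [simp]: "u < n \<Longrightarrow> cyc_pos n u = Suc u"
  by (simp add: cyc_pos_def)

lemma cyc_pos_pred: "i \<in> {1..n} \<Longrightarrow> cyc_pos n (i - 1) = i"
  by (auto simp: cyc_pos_def)

lemma cyc_pos_cyc_pos: "cyc_pos n (cyc_pos n u) = cyc_pos n (Suc u)"
  by (simp add: cyc_pos_def mod_Suc_eq)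

lemma cyc_pos_add_mult: "cyc_pos n (u + n * m) = cyc_pos n u"
  by (simp add: cyc_pos_def)

lemma cyc_pos_neq: "n \<ge> 2 \<Longrightarrow> i \<in> {1..n} \<Longrightarrow> cyc_pos n i \<noteq> i"
  by (cases "i = n") (auto simp: cyc_pos_def)

lemma cyc_pos_eq_iff:
  assumes "i \<in> {1..n}" "j \<in> {1..n}"
  shows "cyc_pos n i = j \<longleftrightarrow> i = (if j = 1 then n else j - 1)"
  using assms by (cases "i = n") (auto simp: cyc_pos_def)

lemma mod_eq_imp_eq_nat:
  fixes u v n :: nat
  assumes "u mod n = v mod n" "u \<le> v" "v < u + n"
  shows "u = v"
proof -
  have "n dvd v - u" "v - u < n"
    using assms mod_eq_dvd_iff_nat[of u v n] by auto
  then show ?thesis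
    using assms(2) nat_dvd_not_less[of "v - u" n] by (cases "v - u") auto
qed

lemma inj_on_cyc_pos: "inj_on (cyc_pos n) {a..<a + n}"
proof
  fix u v assume "u \<in> {a..<a + n}" "v \<in> {a..<a + n}" "cyc_pos n u = cyc_pos n v"
  then show "u = v"
    using mod_eq_imp_eq_nat[of u n v] mod_eq_imp_eq_nat[of v n u]
    by (cases "u \<le> v") (auto simp: cyc_pos_def)
qed

lemma image_cyc_pos_full: "n > 0 \<Longrightarrow> cyc_pos n ` {a..<a + n} = {1..n}"
  using card_image[OF inj_on_cyc_pos, of n a] image_cyc_pos_subset
  by (intro card_subset_eq) auto

lemma card_image_cyc_pos: "k \<le> n \<Longrightarrow> card (cyc_pos n ` {a..<a + k}) = k"
  by (subst card_image) (auto intro: inj_on_subset[OF inj_on_cyc_pos[of n a]])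

lemma image_cyc_pos_shift: "cyc_pos n ` {a + n * m..<b + n * m} = cyc_pos n ` {a..<b}"
proof -
  have "{a + n * m..<b + n * m} = (\<lambda>v. v + n * m) ` {a..<b}"
    by (simp add: image_add_atLeastLessThan')
  then have "cyc_pos n ` {a + n * m..<b + n * m} = (\<lambda>v. cyc_pos n (v + n * m)) ` {a..<b}"
    by (simp only: image_image)
  then show ?thesis
    by (simp only: cyc_pos_add_mult image_ident)
qed

lemma image_cyc_pos_mod: "cyc_pos n ` {a..<a + k} = cyc_pos n ` {a mod n..<a mod n + k}"
  using image_cyc_pos_shift[of n "a mod n" "a div n" "a mod n + k"]
  by (simp add: add.assoc add.commute[of k] mod_mult_div_eq)

lemma cyc_interval_eq: "i \<in> {1..n} \<Longrightarrow> cyc_interval n i k = cyc_pos n ` {i - 1..<i - 1 + k}"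
proof -
  have "{i - 1..<i - 1 + k} = (\<lambda>t. i - 1 + t) ` {..<k}"
    by (simp add: image_add_atLeastLessThan' lessThan_atLeast0 add.commute)
  then show "cyc_interval n i k = cyc_pos n ` {i - 1..<i - 1 + k}"
    by (auto simp: cyc_interval_def cyc_pos_def)
qed

lemma Con_cycle_iff:
  assumes "n > 0"
  shows "X \<in> Con_cycle n \<longleftrightarrow>
    X = {1..n} \<or> (\<exists>a k. 1 \<le> k \<and> k < n \<and> X = cyc_pos n ` {a..<a + k})"
proof -
  have "(\<exists>i k. i \<in> {1..n} \<and> 1 \<le> k \<and> k < n \<and> X = cyc_interval n i k) \<longleftrightarrow>
        (\<exists>a k. 1 \<le> k \<and> k < n \<and> X = cyc_pos n ` {a..<a + k})"
  proof
    assume "\<exists>i k. i \<in> {1..n} \<and> 1 \<le> k \<and> k < n \<and> X = cyc_interval n i k"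
    then show "\<exists>a k. 1 \<le> k \<and> k < n \<and> X = cyc_pos n ` {a..<a + k}"
      using cyc_interval_eq by blast
  next
    assume "\<exists>a k. 1 \<le> k \<and> k < n \<and> X = cyc_pos n ` {a..<a + k}"
    then obtain a k where "1 \<le> k" "k < n" "X = cyc_pos n ` {a..<a + k}"
      by blast
    moreover have "a mod n + 1 \<in> {1..n}"
      using assms by (simp add: Suc_leI)
    moreover have "cyc_pos n ` {a..<a + k} = cyc_interval n (a mod n + 1) k"
      using cyc_interval_eq[OF calculation(4)] image_cyc_pos_mod[of n a k] by simp
    ultimately show "\<exists>i k. i \<in> {1..n} \<and> 1 \<le> k \<and> k < n \<and> X = cyc_interval n i k"
      by blast
  qed
  then show ?thesis
    unfolding Con_cycle_def by blast
qed

lemma arc_in_Con_cycle: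
  assumes "n > 0" "a < b"
  shows "cyc_pos n ` {a..<b} \<in> Con_cycle n"
proof (cases "b - a < n")
  case True
  then have "1 \<le> b - a \<and> b - a < n \<and> cyc_pos n ` {a..<b} = cyc_pos n ` {a..<a + (b - a)}"
    using assms(2) by simp
  then show ?thesis
    unfolding Con_cycle_iff[OF assms(1)] by blast
next
  case False
  then have "cyc_pos n ` {a..<a + n} \<subseteq> cyc_pos n ` {a..<b}"
    by (intro image_mono) auto
  then have "cyc_pos n ` {a..<b} = {1..n}"
    using image_cyc_pos_full[OF assms(1), of a] image_cyc_pos_subset[OF assms(1), of "{a..<b}"]
    by (intro subset_antisym) simp_all
  then show ?thesis
    by (simp add: Con_cycle_def)
qed

lemma Con_cycle_subset: "n > 0 \<Longrightarrow> X \<in> Con_cycle n \<Longrightarrow> X \<subseteq> {1..n}"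
  unfolding Con_cycle_iff using image_cyc_pos_subset by auto

lemma Diff_arc:
  assumes "n > 0" "k \<le> n"
  shows "{1..n} - cyc_pos n ` {a..<a + k} = cyc_pos n ` {a + k..<a + n}"
proof -
  have "{a + k..<a + n} = {a..<a + n} - {a..<a + k}"
    using assms by auto
  moreover have "cyc_pos n ` ({a..<a + n} - {a..<a + k}) = cyc_pos n ` {a..<a + n} - cyc_pos n ` {a..<a + k}"
    using assms(2) by (intro inj_on_image_set_diff[OF inj_on_cyc_pos[of n a]]) auto
  ultimately show ?thesis
    using image_cyc_pos_full[OF assms(1), of a] by simp
qed

definition cycle_edge :: "nat \<Rightarrow> nat \<Rightarrow> nat set" where
  "cycle_edge n i = {i, cyc_pos n i}"

lemma cycle_edges_eq_image: "cycle_edges n = cycle_edge n ` {1..n}"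
  by (auto simp: cycle_edges_def cycle_edge_def cyc_pos_def)

lemma cycle_edge_eq_arc:
  assumes "i \<in> {1..n}"
  shows "cycle_edge n i = cyc_pos n ` {i - 1..<i + 1}"
proof -
  have "{i - 1..<i + 1} = {i - 1, i}"
    using assms by auto
  then show ?thesis
    using cyc_pos_pred[OF assms] by (simp add: cycle_edge_def)
qed

lemma inj_on_cycle_edge:
  assumes "n \<ge> 3"
  shows "inj_on (cycle_edge n) {1..n}"
proof
  fix i j assume i: "i \<in> {1..n}" and j: "j \<in> {1..n}" and eq: "cycle_edge n i = cycle_edge n j"
  show "i = j"
  proof (rule ccontr)
    assume "i \<noteq> j"
    with eq have "i = cyc_pos n j" "j = cyc_pos n i"
      by (auto simp: cycle_edge_def doubleton_eq_iff)
    then have "cyc_pos n (Suc (Suc (i - 1))) = cyc_pos n (i - 1)"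
      using i cyc_pos_pred[OF i] cyc_pos_cyc_pos[of n i] by (simp add: Suc_diff_le)
    moreover have "Suc (Suc (i - 1)) \<in> {i - 1..<i - 1 + n}" "i - 1 \<in> {i - 1..<i - 1 + n}"
      using assms by auto
    ultimately show False
      using inj_on_cyc_pos[of n "i - 1"] by (auto dest: inj_onD)
  qed
qed

lemma card_cycle_edges: "n \<ge> 3 \<Longrightarrow> card (cycle_edges n) = n"
  using card_image[OF inj_on_cycle_edge[of n]] by (simp add: cycle_edges_eq_image)

lemma restr_cycle_edges:
  "restr (cycle_edges n) J = cycle_edge n ` {i \<in> {1..n}. i \<in> J \<and> cyc_pos n i \<in> J}"
  by (auto simp: restr_def cycle_edges_eq_image cycle_edge_def)

lemma inner_points_arc:
  assumes "k < n"
  shows "{i \<in> {1..n}. i \<in> cyc_pos n ` {a..<a + k} \<and> cyc_pos n i \<in> cyc_pos n ` {a..<a + k}}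
       = cyc_pos n ` {a..<a + (k - 1)}"
proof (intro equalityI subsetI)
  fix i assume "i \<in> cyc_pos n ` {a..<a + (k - 1)}"
  then obtain u where "u \<in> {a..<a + (k - 1)}" "i = cyc_pos n u"
    by blast
  then show "i \<in> {i \<in> {1..n}. i \<in> cyc_pos n ` {a..<a + k} \<and> cyc_pos n i \<in> cyc_pos n ` {a..<a + k}}"
    using assms cyc_pos_in[of n u] cyc_pos_cyc_pos[of n u] by force
next
  fix i assume "i \<in> {i \<in> {1..n}. i \<in> cyc_pos n ` {a..<a + k} \<and> cyc_pos n i \<in> cyc_pos n ` {a..<a + k}}"
  then obtain u v where u: "u \<in> {a..<a + k}" "i = cyc_pos n u"
    and v: "v \<in> {a..<a + k}" "cyc_pos n (Suc u) = cyc_pos n v"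
    using cyc_pos_cyc_pos by auto
  have "Suc u \<noteq> a + k"
  proof
    assume "Suc u = a + k"
    then have "Suc u \<in> {a..<a + n}" "v \<in> {a..<a + n}"
      using assms v(1) by auto
    then have "Suc u = v"
      using inj_onD[OF inj_on_cyc_pos v(2)] by blast
    then show False
      using \<open>Suc u = a + k\<close> v(1) by simp
  qed
  then show "i \<in> cyc_pos n ` {a..<a + (k - 1)}"
    using u by auto
qed

lemma card_restr_cycle_edges_arc:
  assumes "n \<ge> 3" "k < n"
  shows "card (restr (cycle_edges n) (cyc_pos n ` {a..<a + k})) = k - 1"
proof -
  have "inj_on (cycle_edge n) (cyc_pos n ` {a..<a + (k - 1)})"
    using assms(1) image_cyc_pos_subset[of n] by (intro inj_on_subset[OF inj_on_cycle_edge]) auto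
  then show ?thesis
    unfolding restr_cycle_edges inner_points_arc[OF assms(2)]
    using assms card_image_cyc_pos[of "k - 1" n a] by (simp add: card_image)
qed

lemma restr_cycle_edges_full: "n > 0 \<Longrightarrow> restr (cycle_edges n) {1..n} = cycle_edges n"
  using cyc_pos_in[of n] by (auto simp: restr_def cycle_edges_eq_image cycle_edge_def)

lemma cycle_edges_subset_Con_cycle: "n \<ge> 3 \<Longrightarrow> cycle_edges n \<subseteq> Con_cycle n"
  by (auto simp: cycle_edges_eq_image cycle_edge_eq_arc intro!: arc_in_Con_cycle)

section \<open>Building closure of the edges\<close>

lemma Un_arcs_in_Con_cycle:
  assumes "n > 0" "a < b" "c < d" "cyc_pos n ` {a..<b} \<inter> cyc_pos n ` {c..<d} \<noteq> {}"
  shows "cyc_pos n ` {a..<b} \<union> cyc_pos n ` {c..<d} \<in> Con_cycle n"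
proof -
  obtain u v where u: "u \<in> {a..<b}" and v: "v \<in> {c..<d}" and "cyc_pos n u = cyc_pos n v"
    using assms(4) by blast
  then have "u mod n = v mod n"
    by (simp add: cyc_pos_def)
  then have common: "u + n * (v div n) = v + n * (u div n)"
    using mod_mult_div_eq[of u n] mod_mult_div_eq[of v n] by linarith
  \<comment> \<open>shift both intervals by multiples of \<open>n\<close> until \<open>u\<close> and \<open>v\<close> become the same integer\<close>
  define p q where "p = n * (v div n)" and "q = n * (u div n)"
  have "{a + p..<b + p} \<union> {c + q..<d + q} = {min (a + p) (c + q)..<max (b + p) (d + q)}"
    using u v common unfolding p_def q_def by auto
  moreover have "cyc_pos n ` {a..<b} \<union> cyc_pos n ` {c..<d}
      = cyc_pos n ` ({a + p..<b + p} \<union> {c + q..<d + q})"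
    unfolding p_def q_def image_Un image_cyc_pos_shift ..
  ultimately have "cyc_pos n ` {a..<b} \<union> cyc_pos n ` {c..<d}
      = cyc_pos n ` {min (a + p) (c + q)..<max (b + p) (d + q)}"
    by simp
  then show ?thesis
    using arc_in_Con_cycle[OF assms(1)] assms(2,3) by auto
qed

lemma Con_cycle_building_set:
  assumes "n > 0"
  shows "building_set n (Con_cycle n)"
  unfolding building_set_def
proof (intro conjI ballI impI)
  fix F assume "F \<in> Con_cycle n"
  then show "F \<noteq> {}" "F \<subseteq> {1..n}"
    using assms Con_cycle_subset[OF assms] unfolding Con_cycle_iff[OF assms] by auto
next
  fix i :: nat assume "i \<in> {1..n}"
  then have "{i} = cyc_pos n ` {i - 1..<i}"
    using cyc_pos_pred[of i n] by auto
  then show "{i} \<in> Con_cycle n"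
    using arc_in_Con_cycle[OF assms, of "i - 1" i] \<open>i \<in> {1..n}\<close> by simp
next
  fix F G assume F: "F \<in> Con_cycle n" and G: "G \<in> Con_cycle n" and "F \<inter> G \<noteq> {}"
  show "F \<union> G \<in> Con_cycle n"
  proof (cases "F = {1..n} \<or> G = {1..n}")
    case True
    then have "F \<union> G = {1..n}"
      using Con_cycle_subset[OF assms] F G by blast
    then show ?thesis
      by (simp add: Con_cycle_def)
  next
    case False
    then obtain a k c l where "1 \<le> k" "F = cyc_pos n ` {a..<a + k}" "1 \<le> l" "G = cyc_pos n ` {c..<c + l}"
      using F G unfolding Con_cycle_iff[OF assms] by blast
    then show ?thesis
      using Un_arcs_in_Con_cycle[OF assms, of a "a + k" c "c + l"] \<open>F \<inter> G \<noteq> {}\<close> by simp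
  qed
qed

lemma arc_in_building_set:
  assumes "n > 0" "building_set n B" "cycle_edges n \<subseteq> B"
  shows "cyc_pos n ` {a..<a + Suc k} \<in> B"
proof (induction k)
  case 0
  have "{cyc_pos n a} \<in> B"
    using assms(2) cyc_pos_in[OF assms(1), of a] unfolding building_set_def by blast
  then show ?case
    by simp
next
  case (Suc k)
  define E where "E = cycle_edge n (cyc_pos n (a + k))"
  have "E = {cyc_pos n (a + k), cyc_pos n (Suc (a + k))}"
    by (simp add: E_def cycle_edge_def cyc_pos_cyc_pos)
  moreover have "{a..<a + Suc (Suc k)} = {a..<a + Suc k} \<union> {a + k, Suc (a + k)}"
    by auto
  ultimately have arc_eq: "cyc_pos n ` {a..<a + Suc (Suc k)} = cyc_pos n ` {a..<a + Suc k} \<union> E"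
    by simp
  have "E \<in> B"
    using assms(3) cyc_pos_in[OF assms(1), of "a + k"] unfolding E_def cycle_edges_eq_image by blast
  moreover have "cyc_pos n ` {a..<a + Suc k} \<inter> E \<noteq> {}"
    unfolding E_def cycle_edge_def by auto
  moreover have union_closed: "\<And>F G. F \<in> B \<Longrightarrow> G \<in> B \<Longrightarrow> F \<inter> G \<noteq> {} \<Longrightarrow> F \<union> G \<in> B"
    using assms(2) unfolding building_set_def by blast
  ultimately show ?case
    unfolding arc_eq using Suc.IH by blast
qed

lemma building_closure_cycle_edges:
  assumes "n \<ge> 3"
  shows "building_closure n (cycle_edges n) = Con_cycle n"
proof
  show "building_closure n (cycle_edges n) \<subseteq> Con_cycle n"
    unfolding building_closure_def
    using Con_cycle_building_set cycle_edges_subset_Con_cycle assms by (intro Inter_lower) simp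
next
  have n: "n > 0"
    using assms by simp
  have "X \<in> B" if "building_set n B" "cycle_edges n \<subseteq> B" "X \<in> Con_cycle n" for B X
  proof -
    obtain a k where "X = cyc_pos n ` {a..<a + Suc k}"
    proof (cases "X = {1..n}")
      case True
      then show ?thesis
        using that[of 0 "n - 1"] image_cyc_pos_full[OF n, of 0] n by simp
    next
      case False
      then obtain a k where "1 \<le> k" "X = cyc_pos n ` {a..<a + k}"
        using \<open>X \<in> Con_cycle n\<close> unfolding Con_cycle_iff[OF n] by blast
      then show ?thesis
        using that[of a "k - 1"] by simp
    qed
    then show ?thesis
      using arc_in_building_set[OF n that(1,2)] by simp
  qed
  then show "Con_cycle n \<subseteq> building_closure n (cycle_edges n)"
    unfolding building_closure_def by blast
qed

section \<open>Simplices and Minkowski sums\<close>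

lemma sum_std_basis:
  assumes "finite F"
  shows "(\<Sum>i\<in>F. c i * std_basis i j) = (if j \<in> F then c j else 0)"
proof -
  have "(\<Sum>i\<in>F. c i * std_basis i j) = (\<Sum>i\<in>F. if i = j then c i else 0)"
    by (rule sum.cong) (auto simp: std_basis_def)
  then show ?thesis
    using assms by simp
qed

lemma simplexE:
  assumes "y \<in> simplex F"
  obtains c where "finite F" "\<forall>i\<in>F. 0 \<le> c i" "sum c F = 1" "y = (\<lambda>j. if j \<in> F then c j else 0)"
proof -
  obtain c where c: "\<forall>i\<in>F. 0 \<le> c i" "sum c F = 1" "y = (\<lambda>j. \<Sum>i\<in>F. c i * std_basis i j)"
    using assms unfolding simplex_def by blast
  have fin: "finite F"
    using c(2) sum.infinite[of F c] by (cases "finite F") simp_all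
  then have "y = (\<lambda>j. if j \<in> F then c j else 0)"
    unfolding c(3) by (simp add: sum_std_basis)
  with fin c(1,2) show ?thesis
    by (rule that)
qed

lemma simplex_sum_nonneg: "y \<in> simplex F \<Longrightarrow> 0 \<le> (\<Sum>j\<in>X. y j)"
  by (erule simplexE) (auto intro: sum_nonneg)

lemma simplex_sum_eq_1:
  assumes "y \<in> simplex F" "F \<subseteq> X" "finite X"
  shows "(\<Sum>j\<in>X. y j) = 1"
proof -
  obtain c where "\<forall>i\<in>F. 0 \<le> c i" "sum c F = 1" "y = (\<lambda>j. if j \<in> F then c j else 0)"
    using assms(1) by (rule simplexE)
  then show ?thesis
    using assms(2,3) by (simp add: sum.If_cases Int_absorb1)
qed

lemma simplex_vanishes: "y \<in> simplex F \<Longrightarrow> j \<notin> F \<Longrightarrow> y j = 0"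
  by (erule simplexE) simp

lemma segment_in_simplex:
  assumes "a \<noteq> b" "0 \<le> s" "s \<le> 1"
  shows "(\<lambda>j. s * std_basis a j + (1 - s) * std_basis b j) \<in> simplex {a, b}"
  unfolding simplex_def
  using assms by (intro CollectI exI[of _ "\<lambda>i. if i = a then s else 1 - s"]) auto

lemma nestohedronE:
  assumes "x \<in> nestohedron FF"
  obtains y where "\<forall>F\<in>FF. y F \<in> simplex F" "x = (\<lambda>j. \<Sum>F\<in>FF. y F j)"
  using assms unfolding nestohedron_def by blast

lemma phi_nestohedron_ge:
  assumes "x \<in> nestohedron FF" "finite FF" "finite X"
  shows "real (card (restr FF X)) \<le> phi X x"
proof -
  obtain y where y: "\<forall>F\<in>FF. y F \<in> simplex F" and x: "x = (\<lambda>j. \<Sum>F\<in>FF. y F j)"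
    using assms(1) by (rule nestohedronE)
  have "phi X x = (\<Sum>F\<in>FF. \<Sum>j\<in>X. y F j)"
    unfolding phi_def x by (rule sum.swap)
  also have "\<dots> \<ge> (\<Sum>F\<in>restr FF X. \<Sum>j\<in>X. y F j)"
    using y assms(2) by (intro sum_mono2) (auto simp: restr_def simplex_sum_nonneg)
  also have "(\<Sum>F\<in>restr FF X. \<Sum>j\<in>X. y F j) = (\<Sum>F\<in>restr FF X. 1)"
    using y assms(3) by (intro sum.cong) (auto simp: restr_def simplex_sum_eq_1)
  finally show ?thesis
    by simp
qed

lemma phi_nestohedron_eq:
  assumes "x \<in> nestohedron FF" "\<forall>F\<in>FF. F \<subseteq> X" "finite X"
  shows "phi X x = real (card FF)"
proof -
  obtain y where y: "\<forall>F\<in>FF. y F \<in> simplex F" and x: "x = (\<lambda>j. \<Sum>F\<in>FF. y F j)"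
    using assms(1) by (rule nestohedronE)
  have "phi X x = (\<Sum>F\<in>FF. \<Sum>j\<in>X. y F j)"
    unfolding phi_def x by (rule sum.swap)
  also have "\<dots> = (\<Sum>F\<in>FF. 1)"
    using y assms(2,3) by (intro sum.cong) (auto simp: simplex_sum_eq_1)
  finally show ?thesis
    by simp
qed

lemma nestohedron_vanishes:
  assumes "x \<in> nestohedron FF" "\<forall>F\<in>FF. j \<notin> F"
  shows "x j = 0"
proof -
  obtain y where y: "\<forall>F\<in>FF. y F \<in> simplex F" and x: "x = (\<lambda>j. \<Sum>F\<in>FF. y F j)"
    using assms(1) by (rule nestohedronE)
  then show ?thesis
    using assms(2) by (auto intro: sum.neutral simplex_vanishes)
qed

lemma nestohedron_subset_polyh:
  assumes "finite FF" "\<forall>F\<in>FF. F \<subseteq> {1..n}" "\<forall>X\<in>S. finite X"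
  shows "nestohedron FF \<subseteq> polyh n FF S"
proof
  fix x assume x: "x \<in> nestohedron FF"
  show "x \<in> polyh n FF S"
    unfolding polyh_def
  proof (intro CollectI conjI allI impI ballI)
    fix j :: nat assume "j \<notin> {1..n}"
    then show "x j = 0"
      using assms(2) by (intro nestohedron_vanishes[OF x]) blast
  next
    show "phi {1..n} x = real (card FF)"
      using assms(2) by (rule phi_nestohedron_eq[OF x]) simp
  next
    fix X assume "X \<in> S"
    then show "real (card (restr FF X)) \<le> phi X x"
      using assms(1,3) by (intro phi_nestohedron_ge[OF x]) auto
  qed
qed

section \<open>The polyhedron of the cycle edges\<close>

lemma sum_cycle_edge_segments:
  assumes "w 0 = w n"
  shows "(\<Sum>i\<in>{1..n}. w i * std_basis i j + (1 - w i) * std_basis (cyc_pos n i) j)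
       = (if j \<in> {1..n} then 1 + w j - w (j - 1) else 0)"
proof (cases "j \<in> {1..n}")
  case True
  define p where "p = (if j = 1 then n else j - 1)"
  have "p \<in> {1..n}" "w p = w (j - 1)"
    using True assms by (auto simp: p_def)
  have "(\<Sum>i\<in>{1..n}. (1 - w i) * std_basis (cyc_pos n i) j) = (\<Sum>i\<in>{1..n}. if i = p then 1 - w i else 0)"
  proof (rule sum.cong)
    fix i assume "i \<in> {1..n}"
    then show "(1 - w i) * std_basis (cyc_pos n i) j = (if i = p then 1 - w i else 0)"
      using cyc_pos_eq_iff[OF _ True, of i] by (auto simp: std_basis_def p_def)
  qed simp
  also have "\<dots> = 1 - w (j - 1)"
    using \<open>p \<in> {1..n}\<close> \<open>w p = w (j - 1)\<close> by simp
  finally show ?thesis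
    using True by (simp add: sum.distrib sum_std_basis)
next
  case False
  have "std_basis i j = 0" "std_basis (cyc_pos n i) j = 0" if "i \<in> {1..n}" for i
    using that False cyc_pos_in[of n i] by (auto simp: std_basis_def)
  then show ?thesis
    using False by (intro trans[OF sum.neutral]) auto
qed

lemma cycle_edge_weights_in_nestohedron:
  assumes "n \<ge> 3" "\<forall>i\<in>{1..n}. 0 \<le> w i \<and> w i \<le> 1" "w 0 = w n"
    and "\<forall>j. j \<notin> {1..n} \<longrightarrow> x j = 0" "\<forall>j\<in>{1..n}. x j = 1 + w j - w (j - 1)"
  shows "x \<in> nestohedron (cycle_edges n)"
proof -
  define seg where "seg i = (\<lambda>j. w i * std_basis i j + (1 - w i) * std_basis (cyc_pos n i) j)" for i
  define y where "y F = seg (inv_into {1..n} (cycle_edge n) F)" for F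
  have inj: "inj_on (cycle_edge n) {1..n}"
    using assms(1) by (rule inj_on_cycle_edge)
  have y_edge: "y (cycle_edge n i) = seg i" if "i \<in> {1..n}" for i
    using inv_into_f_f[OF inj that] by (simp add: y_def)
  have "y F \<in> simplex F" if F: "F \<in> cycle_edges n" for F
  proof -
    obtain i where i: "i \<in> {1..n}" "F = cycle_edge n i"
      using F unfolding cycle_edges_eq_image by blast
    then show ?thesis
      using assms(1,2) cyc_pos_neq[of n i] y_edge[OF i(1)]
      unfolding seg_def cycle_edge_def by (auto intro: segment_in_simplex)
  qed
  moreover have "x j = (\<Sum>F\<in>cycle_edges n. y F j)" for j
  proof -
    have "(\<Sum>F\<in>cycle_edges n. y F j) = (\<Sum>i\<in>{1..n}. seg i j)"
      unfolding cycle_edges_eq_image sum.reindex[OF inj] by (intro sum.cong) (auto simp: y_edge)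
    then show ?thesis
      using assms(3-5) sum_cycle_edge_segments[of w n j] by (auto simp: seg_def)
  qed
  ultimately show ?thesis
    unfolding nestohedron_def by blast
qed

lemma polyh_cycle_arc_bounds:
  assumes "n \<ge> 3" "x \<in> polyh n (cycle_edges n) (Con_cycle n)" "1 \<le> k" "k < n"
  shows "real k - 1 \<le> phi (cyc_pos n ` {a..<a + k}) x"
    and "phi (cyc_pos n ` {a..<a + k}) x \<le> real k + 1"
proof -
  have lower: "real l - 1 \<le> phi (cyc_pos n ` {b..<b + l}) x" if "1 \<le> l" "l < n" for b l
  proof -
    have "cyc_pos n ` {b..<b + l} \<in> Con_cycle n"
      using assms(1) that by (intro arc_in_Con_cycle) auto
    then have "real (card (restr (cycle_edges n) (cyc_pos n ` {b..<b + l}))) \<le> phi (cyc_pos n ` {b..<b + l}) x"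
      using assms(2) unfolding polyh_def by blast
    then show ?thesis
      using card_restr_cycle_edges_arc[OF assms(1) that(2), of b] that(1) by (simp add: of_nat_diff)
  qed
  show "real k - 1 \<le> phi (cyc_pos n ` {a..<a + k}) x"
    using lower assms(3,4) .
  have "phi {1..n} x = real n"
    using assms(2) card_cycle_edges[OF assms(1)] unfolding polyh_def by simp
  moreover have "phi ({1..n} - cyc_pos n ` {a..<a + k}) x = phi {1..n} x - phi (cyc_pos n ` {a..<a + k}) x"
    using assms(1) image_cyc_pos_subset[of n] unfolding phi_def by (intro sum_diff) auto
  moreover have "real (n - k) - 1 \<le> phi ({1..n} - cyc_pos n ` {a..<a + k}) x"
    using assms(1,3,4) lower[of "n - k" "a + k"] Diff_arc[of n k a] by simp
  ultimately show "phi (cyc_pos n ` {a..<a + k}) x \<le> real k + 1"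
    using assms(4) by (simp add: of_nat_diff)
qed

lemma polyh_cycle_interval_bound:
  assumes "n \<ge> 3" "x \<in> polyh n (cycle_edges n) (Con_cycle n)" "i \<le> j" "j \<le> n"
  shows "\<bar>phi {Suc i..j} x - (real j - real i)\<bar> \<le> 1"
proof -
  consider "j = i" | "i = 0" "j = n" | "1 \<le> j - i" "j - i < n"
    using assms(3,4) by linarith
  then show ?thesis
  proof cases
    case 1
    then show ?thesis
      by (simp add: phi_def)
  next
    case 2
    then show ?thesis
      using assms(2) card_cycle_edges[OF assms(1)] unfolding polyh_def by simp
  next
    case 3
    have "cyc_pos n ` {i..<i + (j - i)} = Suc ` {i..<j}"
      using assms(3,4) by (intro image_cong) auto
    then have "{Suc i..j} = cyc_pos n ` {i..<i + (j - i)}"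
      by (auto simp: image_Suc_atLeastLessThan)
    then show ?thesis
      using polyh_cycle_arc_bounds[OF assms(1,2) 3, of i] assms(3) by (simp add: of_nat_diff abs_le_iff)
  qed
qed

lemma polyh_subset_nestohedron:
  assumes "n \<ge> 3"
  shows "polyh n (cycle_edges n) (Con_cycle n) \<subseteq> nestohedron (cycle_edges n)"
proof
  fix x assume x: "x \<in> polyh n (cycle_edges n) (Con_cycle n)"
  define S where "S j = phi {1..j} x - real j" for j
  have S_diff: "\<bar>S j - S i\<bar> \<le> 1" if "i \<le> j" "j \<le> n" for i j
  proof -
    have "phi {1..j} x = phi {1..i} x + phi {Suc i..j} x"
      using sum.ub_add_nat[of 1 i x "j - i"] that(1) by (simp add: phi_def)
    then show ?thesis
      using polyh_cycle_interval_bound[OF assms x that] that(1) by (simp add: S_def of_nat_diff)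
  qed
  define m where "m = Min (S ` {0..n})"
  have "m \<in> S ` {0..n}"
    unfolding m_def by (intro Min_in) auto
  then obtain j0 where "j0 \<le> n" "S j0 = m"
    by auto
  define w where "w j = S j - m" for j
  have "0 \<le> w j \<and> w j \<le> 1" if "j \<le> n" for j
    using that S_diff[of j0 j] S_diff[of j j0] \<open>S j0 = m\<close> \<open>j0 \<le> n\<close>
    unfolding w_def m_def by (cases "j0 \<le> j") (auto simp: Min_le)
  moreover have "w 0 = w n"
    using x card_cycle_edges[OF assms] unfolding polyh_def w_def S_def by (simp add: phi_def)
  moreover have "x j = 1 + w j - w (j - 1)" if "j \<in> {1..n}" for j
    using that by (cases j) (auto simp: w_def S_def phi_def)
  ultimately show "x \<in> nestohedron (cycle_edges n)"
    using x assms unfolding polyh_def by (intro cycle_edge_weights_in_nestohedron[of n w x]) auto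
qed

section \<open>Irredundancy and connectivity\<close>

lemma arc_witness_inequality:
  fixes p q k n :: nat
  assumes "p \<le> k" "1 \<le> k" "k < n" "q = 0 \<Longrightarrow> p < k"
  defines "D \<equiv> 1 + 1 / real n"
  shows "real p + real q - 1 \<le> real p * (1 - D / real k) + real q * (1 + D / real (n - k))"
proof -
  have "0 < D"
    unfolding D_def by (simp add: add_pos_nonneg)
  have "real p * D / real k \<le> 1 + real q * D / real (n - k)"
  proof (cases "q = 0")
    case True
    then have "real p \<le> real k - 1"
      using assms(4) by simp
    moreover have "(real k - 1) * D \<le> real k"
      using assms(3) by (simp add: D_def field_simps)
    ultimately have "real p * D \<le> real k"
      using \<open>0 < D\<close> by (smt (verit) mult_right_mono)
    then show ?thesis
      using assms(2) True by (simp add: field_simps)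
  next
    case False
    have "real p * D / real k \<le> real k * D / real k"
      using assms(1) \<open>0 < D\<close> by (intro divide_right_mono mult_right_mono) auto
    also have "\<dots> = D"
      using assms(2) by simp
    also have "\<dots> \<le> 1 + D / real (n - k)"
      using assms(3) by (simp add: D_def field_simps of_nat_diff)
    also have "\<dots> \<le> 1 + real q * D / real (n - k)"
      using False \<open>0 < D\<close> by (intro add_left_mono divide_right_mono) auto
    finally show ?thesis .
  qed
  then show ?thesis
    by (simp add: algebra_simps)
qed

lemma phi_two_valued:
  assumes "J \<subseteq> {1..n}"
  shows "phi J (\<lambda>j. if j \<in> X then \<alpha> else if j \<in> {1..n} then \<beta> else 0)
       = real (card (J \<inter> X)) * \<alpha> + real (card (J - X)) * \<beta>"
proof -
  have "finite J"
    using assms finite_subset by blast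
  then have "phi J (\<lambda>j. if j \<in> X then \<alpha> else if j \<in> {1..n} then \<beta> else 0)
      = (\<Sum>j\<in>J \<inter> X. \<alpha>) + (\<Sum>j\<in>J - X. if j \<in> {1..n} then \<beta> else 0)"
    unfolding phi_def by (simp add: sum.If_cases Diff_eq)
  also have "(\<Sum>j\<in>J - X. if j \<in> {1..n} then \<beta> else 0) = (\<Sum>j\<in>J - X. \<beta>)"
    using assms by (intro sum.cong) auto
  finally show ?thesis
    by simp
qed

definition arc_witness :: "nat \<Rightarrow> nat set \<Rightarrow> nat \<Rightarrow> real" where
  "arc_witness n X = (\<lambda>j. if j \<in> X then 1 - (1 + 1 / real n) / real (card X)
     else if j \<in> {1..n} then 1 + (1 + 1 / real n) / real (n - card X) else 0)"

lemma phi_arc_witness_full: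
  assumes "n \<ge> 3" "X \<subseteq> {1..n}" "1 \<le> card X" "card X < n"
  shows "phi {1..n} (arc_witness n X) = real n"
proof -
  have "card ({1..n} - X) = n - card X"
    using assms(2) by (simp add: card_Diff_subset finite_subset)
  then show ?thesis
    unfolding arc_witness_def using assms
    by (simp add: phi_two_valued Int_absorb1 field_simps of_nat_diff)
qed

lemma phi_arc_witness_arc_ge:
  assumes "n \<ge> 3" "1 \<le> k" "k < n" "X = cyc_pos n ` {a..<a + k}"
    and "1 \<le> l" "l < n" "J = cyc_pos n ` {b..<b + l}" "J \<noteq> X"
  shows "real (card (restr (cycle_edges n) J)) \<le> phi J (arc_witness n X)"
proof -
  have X_sub: "X \<subseteq> {1..n}" and card_X: "card X = k" and J_sub: "J \<subseteq> {1..n}"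
    using assms image_cyc_pos_subset[of n] card_image_cyc_pos[of k n a] by auto
  then have "finite X" "finite J"
    using finite_subset by auto
  then have split: "card (J \<inter> X) + card (J - X) = l"
    using card_Int_Diff[of J X] card_image_cyc_pos[of l n b] assms(6,7) by simp
  have "real (card (restr (cycle_edges n) J)) = real (card (J \<inter> X)) + real (card (J - X)) - 1"
    using card_restr_cycle_edges_arc[OF assms(1,6), of b] assms(5,7) split by (simp add: of_nat_diff)
  moreover have "card (J \<inter> X) \<le> k"
    using card_X \<open>finite X\<close> card_mono[of X "J \<inter> X"] by auto
  moreover have "card (J \<inter> X) < k" if "card (J - X) = 0"
  proof -
    have "J \<subset> X"
      using that assms(8) \<open>finite J\<close> by auto
    then show ?thesis
      using card_X \<open>finite X\<close> psubset_card_mono[of X J] by (simp add: Int_absorb2)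
  qed
  ultimately show ?thesis
    using arc_witness_inequality[of "card (J \<inter> X)" k n "card (J - X)"] assms(2,3) J_sub card_X
    by (simp add: arc_witness_def phi_two_valued)
qed

lemma arc_witness_in_polyh:
  assumes "n \<ge> 3" "1 \<le> k" "k < n" "X = cyc_pos n ` {a..<a + k}"
  shows "arc_witness n X \<in> polyh n (cycle_edges n) (Con_cycle n - {X})"
proof -
  have n: "n > 0" and X_sub: "X \<subseteq> {1..n}" and card_X: "card X = k"
    using assms image_cyc_pos_subset[of n] card_image_cyc_pos[of k n a] by auto
  have full: "phi {1..n} (arc_witness n X) = real (card (cycle_edges n))"
    using phi_arc_witness_full[OF assms(1) X_sub] assms card_X card_cycle_edges[OF assms(1)] by simp
  have "real (card (restr (cycle_edges n) J)) \<le> phi J (arc_witness n X)"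
    if J: "J \<in> Con_cycle n" "J \<noteq> X" for J
  proof (cases "J = {1..n}")
    case True
    then show ?thesis
      using full restr_cycle_edges_full[OF n] by simp
  next
    case False
    then obtain b l where "1 \<le> l" "l < n" "J = cyc_pos n ` {b..<b + l}"
      using J(1) unfolding Con_cycle_iff[OF n] by blast
    then show ?thesis
      using phi_arc_witness_arc_ge[OF assms] J(2) by blast
  qed
  moreover have "arc_witness n X j = 0" if "j \<notin> {1..n}" for j
    using that X_sub by (auto simp: arc_witness_def)
  ultimately show ?thesis
    unfolding polyh_def using full by blast
qed

lemma arc_witness_not_in_polyh:
  assumes "n \<ge> 3" "1 \<le> k" "k < n" "X = cyc_pos n ` {a..<a + k}"
  shows "arc_witness n X \<notin> polyh n (cycle_edges n) (Con_cycle n)"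
proof
  have X_sub: "X \<subseteq> {1..n}" and card_X: "card X = k"
    using assms image_cyc_pos_subset[of n] card_image_cyc_pos[of k n a] by auto
  assume "arc_witness n X \<in> polyh n (cycle_edges n) (Con_cycle n)"
  moreover have "X \<in> Con_cycle n"
    using assms by (auto intro: arc_in_Con_cycle)
  ultimately have "real (card (restr (cycle_edges n) X)) \<le> phi X (arc_witness n X)"
    unfolding polyh_def by blast
  moreover have "phi X (arc_witness n X) = real k - (1 + 1 / real n)"
    using X_sub card_X assms(2) by (simp add: arc_witness_def phi_two_valued field_simps)
  moreover have "card (restr (cycle_edges n) X) = k - 1"
    using card_restr_cycle_edges_arc[OF assms(1,3)] assms(4) by simp
  ultimately show False
    using assms(1,2) by (simp add: of_nat_diff)
qed

lemma polyh_cycle_drop_arc_ne: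
  assumes "n \<ge> 3" "X \<in> Con_cycle n - {{1..n}}"
  shows "polyh n (cycle_edges n) (Con_cycle n - {X}) \<noteq> polyh n (cycle_edges n) (Con_cycle n)"
proof -
  have n: "n > 0" and "X \<in> Con_cycle n" "X \<noteq> {1..n}"
    using assms by auto
  then obtain a k where "1 \<le> k" "k < n" "X = cyc_pos n ` {a..<a + k}"
    unfolding Con_cycle_iff[OF n] by blast
  then show ?thesis
    using arc_witness_in_polyh[OF assms(1)] arc_witness_not_in_polyh[OF assms(1)] by blast
qed

lemma cyc_pos_closed_superset:
  assumes "n > 0" "i \<in> {1..n}" "i \<in> A" "\<forall>j\<in>A. cyc_pos n j \<in> A"
  shows "{1..n} \<subseteq> A"
proof -
  have orbit: "cyc_pos n (i - 1 + t) \<in> A" for t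
  proof (induction t)
    case 0
    then show ?case
      using assms(2,3) cyc_pos_pred by simp
  next
    case (Suc t)
    then show ?case
      using assms(4) cyc_pos_cyc_pos[of n "i - 1 + t"] by fastforce
  qed
  show ?thesis
  proof
    fix j assume "j \<in> {1..n}"
    then obtain u where "i - 1 \<le> u" "j = cyc_pos n u"
      using image_cyc_pos_full[OF assms(1), of "i - 1"] by (metis atLeastLessThan_iff imageE)
    then show "j \<in> A"
      using orbit[of "u - (i - 1)"] by simp
  qed
qed

lemma connected_cycle_edges:
  assumes "n \<ge> 3"
  shows "connected_hypergraph n (cycle_edges n)"
  unfolding connected_hypergraph_def
proof (intro allI impI)
  fix A assume A: "A \<subseteq> {1..n} \<and> A \<noteq> {} \<and> A \<noteq> {1..n}"
  have "\<not> (\<forall>j\<in>A. cyc_pos n j \<in> A)"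
  proof
    assume closed: "\<forall>j\<in>A. cyc_pos n j \<in> A"
    obtain i where "i \<in> A"
      using A by blast
    then have "{1..n} \<subseteq> A"
      using A assms closed by (intro cyc_pos_closed_superset[of n i]) auto
    then show False
      using A by blast
  qed
  then obtain i where "i \<in> A" "cyc_pos n i \<notin> A"
    by blast
  moreover have "i \<in> {1..n}" "cyc_pos n i \<in> {1..n}"
    using A \<open>i \<in> A\<close> assms cyc_pos_in[of n i] by auto
  moreover have "cycle_edge n i \<in> cycle_edges n"
    using \<open>i \<in> {1..n}\<close> unfolding cycle_edges_eq_image by (rule imageI)
  ultimately show "\<exists>F\<in>cycle_edges n. F \<inter> A \<noteq> {} \<and> F \<inter> ({1..n} - A) \<noteq> {}"
    by (intro bexI[of _ "cycle_edge n i"]) (auto simp: cycle_edge_def)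
qed

lemma nestohedron_cycle_edges:
  assumes "n \<ge> 3"
  shows "nestohedron (cycle_edges n) = polyh n (cycle_edges n) (Con_cycle n)"
proof
  have n: "n > 0"
    using assms by simp
  have "\<forall>F\<in>cycle_edges n. F \<subseteq> {1..n}"
    using cycle_edges_subset_Con_cycle[OF assms] Con_cycle_subset[OF n] by blast
  moreover have "\<forall>X\<in>Con_cycle n. finite X"
    using Con_cycle_subset[OF n] by (meson finite_atLeastAtMost finite_subset)
  ultimately show "nestohedron (cycle_edges n) \<subseteq> polyh n (cycle_edges n) (Con_cycle n)"
    by (intro nestohedron_subset_polyh) (simp_all add: cycle_edges_eq_image)
  show "polyh n (cycle_edges n) (Con_cycle n) \<subseteq> nestohedron (cycle_edges n)"
    using assms by (rule polyh_subset_nestohedron)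
qed

theorem mainTheorem9:
  fixes n :: nat
  assumes "n \<ge> 3"
  shows "building_closure n (cycle_edges n) = Con_cycle n
       \<and> tight n (cycle_edges n)
       \<and> nestohedron (cycle_edges n) = polyh n (cycle_edges n) (Con_cycle n)
       \<and> (\<forall>X \<in> Con_cycle n - {{1..n}}.
            polyh n (cycle_edges n) (Con_cycle n - {X}) \<noteq> nestohedron (cycle_edges n))"
proof -
  have closure: "building_closure n (cycle_edges n) = Con_cycle n"
    using assms by (rule building_closure_cycle_edges)
  have "tight n (cycle_edges n)"
    unfolding tight_def closure using connected_cycle_edges polyh_cycle_drop_arc_ne assms by blast
  then show ?thesis
    using closure nestohedron_cycle_edges[OF assms] polyh_cycle_drop_arc_ne[OF assms] by simp
qed

end
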